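(* Let $\mathcal E$ be an exchangeability system for a noncommutative probability space $(\mathcal A,\phi)$, let $X_1,\dots,X_n\in\mathcal A$, and for $i=1,\dots,m$ let $Y_i=\sum_{j=1}^n\alpha_{ij}X_j+\beta_i1$ with $\alpha_{ij},\beta_i\in\mathbb C$. If $m\ge2$, then $$K_m(Y_1,\dots,Y_m)=\sum_{j_1,\dots,j_m=1}^n\alpha_{1,j_1}\cdots\alpha_{m,j_m}K_m(X_{j_1},\dots,X_{j_m});$$ in particular it does not depend on the $\beta_i$. Likewise, for every $\pi\in\Pi_m$ having no singleton block, $K_\pi(Y_1,\dots,Y_m)=\sum_{j_1,\dots,j_m}\alpha_{1,j_1}\cdots\alpha_{m,j_m}K_\pi(X_{j_1},\dots,X_{j_m})$.
   Context: A noncommutative probability space is a pair $(\mathcal A,\phi)$ of a complex unital algebra $\mathcal A$ and a unital linear functional $\phi$. An exchangeability system $\mathcal E$ for $(\mathcal A,\phi)$ consists of a noncommutative probability space $(\mathcal U,\tilde\phi)$ and a family $(\iota_k)_{k\in\mathbb N}$ of embeddings (injective unital algebra homomorphisms) $\iota_k:\mathcal A\to\mathcal A_k\subseteq\mathcal U$ with $\tilde\phi\circ\iota_k=\phi$; write $X^{(k)}=\iota_k(X)$. It is required that for all $X_1,\dots,X_n\in\mathcal A$, all indices $i_1,\dots,i_n\in\mathbb N$ and every bijection $\sigma$ of $\mathbb N$, $\tilde\phi(X_1^{(i_1)}\cdots X_n^{(i_n)})=\tilde\phi(X_1^{(\sigma(i_1))}\cdots X_n^{(\sigma(i_n))})$;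 this value depends only on the kernel of $j\mapsto i_j$ and for a partition $\sigma$ of $[n]$ is denoted $\phi_\sigma(X_1,\dots,X_n)$. For a primitive $m$-th root of unity $\omega$, $K_m(Y_1,\dots,Y_m)=\frac1m\tilde\phi(Y_1^\omega\cdots Y_m^\omega)$ with $Y^\omega=\sum_{k=1}^m\omega^kY^{(k)}$. $\Pi_m$ is the lattice of set partitions of $[m]$ under refinement with Möbius function $\mu$, and $K_\pi(Y_1,\dots,Y_m)=\sum_{\sigma\le\pi}\phi_\sigma(Y_1,\dots,Y_m)\mu(\sigma,\pi)$. *)

theory Defs
  imports Complex_Main "HOL-Library.Disjoint_Sets" "HOL-Library.FuncSet"
begin

class complex_algebra_1 = ring_1 +
  fixes scaleC :: "complex \<Rightarrow> 'a \<Rightarrow> 'a" (infixr \<open>*\<^sub>C\<close> 75)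
  assumes scaleC_add_right: "scaleC a (x + y) = scaleC a x + scaleC a y"
    and scaleC_add_left: "scaleC (a + b) x = scaleC a x + scaleC b x"
    and scaleC_scaleC: "scaleC a (scaleC b x) = scaleC (a * b) x"
    and scaleC_one: "scaleC 1 x = x"
    and mult_scaleC_left: "scaleC a x * y = scaleC a (x * y)"
    and mult_scaleC_right: "x * scaleC a y = scaleC a (x * y)"

definition ncps :: "('a::complex_algebra_1 \<Rightarrow> complex) \<Rightarrow> bool" where
  "ncps \<phi> \<longleftrightarrow> (\<forall>x y. \<phi> (x + y) = \<phi> x + \<phi> y) \<and>
                (\<forall>c x. \<phi> (c *\<^sub>C x) = c * \<phi> x) \<and> \<phi> 1 = 1"

definition unital_alg_hom :: "('a::complex_algebra_1 \<Rightarrow> 'b::complex_algebra_1) \<Rightarrow> bool" where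
  "unital_alg_hom f \<longleftrightarrow> (\<forall>x y. f (x + y) = f x + f y) \<and> (\<forall>x y. f (x * y) = f x * f y) \<and>
                        (\<forall>c x. f (c *\<^sub>C x) = c *\<^sub>C f x) \<and> f 1 = 1"

definition oprod :: "nat \<Rightarrow> (nat \<Rightarrow> 'a::monoid_mult) \<Rightarrow> 'a" where
  "oprod n Z = prod_list (map Z [0..<n])"

definition exch_system :: "('a::complex_algebra_1 \<Rightarrow> complex) \<Rightarrow> ('u::complex_algebra_1 \<Rightarrow> complex)
    \<Rightarrow> (nat \<Rightarrow> 'a \<Rightarrow> 'u) \<Rightarrow> bool" where
  "exch_system \<phi> \<phi>t \<iota> \<longleftrightarrow> ncps \<phi> \<and> ncps \<phi>t \<and>
     (\<forall>k. inj (\<iota> k) \<and> unital_alg_hom (\<iota> k) \<and> (\<forall>x. \<phi>t (\<iota> k x) = \<phi> x)) \<and>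
     (\<forall>(n::nat) (Xs::nat \<Rightarrow> 'a) (idx::nat \<Rightarrow> nat) (\<sigma>::nat \<Rightarrow> nat). bij \<sigma> \<longrightarrow>
        \<phi>t (oprod n (\<lambda>j. \<iota> (idx j) (Xs j))) = \<phi>t (oprod n (\<lambda>j. \<iota> (\<sigma> (idx j)) (Xs j))))"

definition primitive_root :: "nat \<Rightarrow> complex \<Rightarrow> bool" where
  "primitive_root m \<omega> \<longleftrightarrow> \<omega> ^ m = 1 \<and> (\<forall>k. 0 < k \<and> k < m \<longrightarrow> \<omega> ^ k \<noteq> 1)"

definition omega_lift :: "(nat \<Rightarrow> 'a \<Rightarrow> 'u::complex_algebra_1) \<Rightarrow> nat \<Rightarrow> complex \<Rightarrow> 'a \<Rightarrow> 'u" where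
  "omega_lift \<iota> m \<omega> Y = (\<Sum>k=1..m. (\<omega> ^ k) *\<^sub>C \<iota> k Y)"

definition ncK :: "('u::complex_algebra_1 \<Rightarrow> complex) \<Rightarrow> (nat \<Rightarrow> 'a \<Rightarrow> 'u) \<Rightarrow> nat \<Rightarrow> complex
    \<Rightarrow> (nat \<Rightarrow> 'a) \<Rightarrow> complex" where
  "ncK \<phi>t \<iota> m \<omega> Y = (1 / of_nat m) * \<phi>t (oprod m (\<lambda>i. omega_lift \<iota> m \<omega> (Y i)))"

definition Pi_set :: "nat \<Rightarrow> nat set set set" where
  "Pi_set m = {p. partition_on {0..<m} p}"

definition refines :: "'a set set \<Rightarrow> 'a set set \<Rightarrow> bool" where
  "refines \<sigma> \<pi> \<longleftrightarrow> (\<forall>B\<in>\<sigma>. \<exists>C\<in>\<pi>. B \<subseteq> C)"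

text \<open>Moebius function of a finite poset \<open>(P, le)\<close>, via the standard recursion
  \<open>\<mu>(x,x) = 1\<close>, \<open>\<mu>(x,y) = - \<Sum>{\<mu>(x,z) | x \<le> z < y}\<close> for \<open>x < y\<close>, \<open>\<mu>(x,y) = 0\<close> otherwise.
  The recursion is unfolded with a fuel parameter; fuel \<open>card P\<close> exceeds the length of
  every chain, so it computes the Moebius function.\<close>
fun moeb_fuel :: "nat \<Rightarrow> 'p set \<Rightarrow> ('p \<Rightarrow> 'p \<Rightarrow> bool) \<Rightarrow> 'p \<Rightarrow> 'p \<Rightarrow> int" where
  "moeb_fuel 0 P le x y = (if x = y then 1 else 0)"
| "moeb_fuel (Suc k) P le x y =
     (if x = y then 1
      else if le x y then - (\<Sum>z\<in>{z\<in>P. le x z \<and> le z y \<and> z \<noteq> y}. moeb_fuel k P le x z)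
      else 0)"

definition moebius :: "'p set \<Rightarrow> ('p \<Rightarrow> 'p \<Rightarrow> bool) \<Rightarrow> 'p \<Rightarrow> 'p \<Rightarrow> int" where
  "moebius P le x y = moeb_fuel (card P) P le x y"

definition mu_Pi :: "nat \<Rightarrow> nat set set \<Rightarrow> nat set set \<Rightarrow> int" where
  "mu_Pi m \<sigma> \<pi> = moebius (Pi_set m) refines \<sigma> \<pi>"

text \<open>A canonical index function with kernel \<open>\<sigma>\<close>: \<open>j\<close> gets the least element of its block.\<close>
definition part_index :: "nat set set \<Rightarrow> nat \<Rightarrow> nat" where
  "part_index \<sigma> j = Min (THE B. B \<in> \<sigma> \<and> j \<in> B)"

definition phi_part :: "('u::complex_algebra_1 \<Rightarrow> complex) \<Rightarrow> (nat \<Rightarrow> 'a \<Rightarrow> 'u) \<Rightarrow> nat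
    \<Rightarrow> nat set set \<Rightarrow> (nat \<Rightarrow> 'a) \<Rightarrow> complex" where
  "phi_part \<phi>t \<iota> m \<sigma> Y = \<phi>t (oprod m (\<lambda>j. \<iota> (part_index \<sigma> j) (Y j)))"

definition ncKpi :: "('u::complex_algebra_1 \<Rightarrow> complex) \<Rightarrow> (nat \<Rightarrow> 'a \<Rightarrow> 'u) \<Rightarrow> nat
    \<Rightarrow> nat set set \<Rightarrow> (nat \<Rightarrow> 'a) \<Rightarrow> complex" where
  "ncKpi \<phi>t \<iota> m \<pi> Y =
     (\<Sum>\<sigma>\<in>{\<sigma>\<in>Pi_set m. refines \<sigma> \<pi>}. phi_part \<phi>t \<iota> m \<sigma> Y * of_int (mu_Pi m \<sigma> \<pi>))"

end

theory Submission
  imports Defs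
begin

text \<open>Append \<open>X\<^sub>n = 1\<close> to the variables, so that every \<open>Y\<^sub>i\<close> is a linear combination
  of \<open>X\<^sub>0, \<dots>, X\<^sub>n\<close>. Both \<open>K\<^sub>m\<close> and \<open>K\<^sub>\<pi>\<close> are multilinear, so they expand into a sum over
  index tuples, and it remains to see that every term having \<open>1\<close> in some slot \<open>p\<close> vanishes.
  For \<open>K\<^sub>m\<close> this holds because the \<open>\<omega>\<close>-lift of \<open>1\<close> is \<open>(\<Sum>\<^sub>k \<omega>\<^sup>k) 1 = 0\<close>. For \<open>K\<^sub>\<pi>\<close>,
  exchangeability gives \<open>\<phi>\<^sub>\<sigma> = \<phi>\<^bsub>\<sigma> \<and> \<rho>\<^esub>\<close> when the \<open>p\<close>-th argument is \<open>1\<close>, where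
  \<open>\<rho> = {{p}, [m] - {p}}\<close>; as \<open>\<pi>\<close> has no singleton block, \<open>\<pi> \<le> \<rho>\<close> fails, and Weisner's
  theorem \<open>\<Sum>\<^bsub>\<sigma> \<le> \<pi>\<^esub> f(\<sigma> \<and> \<rho>) \<mu>(\<sigma>, \<pi>) = 0\<close> makes the term vanish.\<close>

section \<open>Multilinear expansion\<close>

lemma scaleC_zero_left [simp]: "(0::complex) *\<^sub>C (x::'a::complex_algebra_1) = 0"
proof -
  have "0 *\<^sub>C x = 0 *\<^sub>C x + (0 *\<^sub>C x :: 'a)"
    by (metis add_0 scaleC_add_left)
  then show ?thesis by simp
qed

lemma scaleC_zero_right [simp]: "c *\<^sub>C (0::'a::complex_algebra_1) = 0"
proof -
  have "c *\<^sub>C 0 = c *\<^sub>C 0 + (c *\<^sub>C 0 :: 'a)"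
    by (metis add_0 scaleC_add_right)
  then show ?thesis by simp
qed

lemma scaleC_sum_right: "c *\<^sub>C (\<Sum>x\<in>A. f x) = (\<Sum>x\<in>A. c *\<^sub>C (f x :: 'a::complex_algebra_1))"
  by (induction A rule: infinite_finite_induct) (auto simp: scaleC_add_right)

lemma scaleC_sum_left: "(\<Sum>x\<in>A. f x) *\<^sub>C (y::'a::complex_algebra_1) = (\<Sum>x\<in>A. f x *\<^sub>C y)"
  by (induction A rule: infinite_finite_induct) (auto simp: scaleC_add_left)

definition complex_linear :: "('a::complex_algebra_1 \<Rightarrow> 'b::complex_algebra_1) \<Rightarrow> bool" where
  "complex_linear f \<longleftrightarrow> (\<forall>x y. f (x + y) = f x + f y) \<and> (\<forall>c x. f (c *\<^sub>C x) = c *\<^sub>C f x)"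

lemma complex_linear_sum:
  assumes "complex_linear f"
  shows "f (\<Sum>c\<in>C. \<gamma> c *\<^sub>C x c) = (\<Sum>c\<in>C. \<gamma> c *\<^sub>C f (x c))"
proof -
  have "f 0 = 0"
    using assms unfolding complex_linear_def by (metis scaleC_zero_left)
  then show ?thesis
    using assms unfolding complex_linear_def by (induction C rule: infinite_finite_induct) simp_all
qed

lemma unital_alg_hom_imp_complex_linear: "unital_alg_hom f \<Longrightarrow> complex_linear f"
  unfolding unital_alg_hom_def complex_linear_def by simp

lemma complex_linear_omega_lift:
  assumes "\<And>k. complex_linear (\<iota> k)"
  shows "complex_linear (omega_lift \<iota> m \<omega>)"
  using assms unfolding complex_linear_def omega_lift_def
  by (simp add: scaleC_add_right sum.distrib scaleC_sum_right scaleC_scaleC mult.commute)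

lemma ncps_zero: "ncps \<phi> \<Longrightarrow> \<phi> 0 = 0"
  unfolding ncps_def by (metis mult_zero_left scaleC_zero_left)

lemma ncps_sum:
  assumes "ncps \<phi>"
  shows "\<phi> (\<Sum>c\<in>C. a c *\<^sub>C x c) = (\<Sum>c\<in>C. a c * \<phi> (x c))"
  using assms ncps_zero[OF assms] unfolding ncps_def
  by (induction C rule: infinite_finite_induct) simp_all

lemma oprod_Suc: "oprod (Suc m) Z = oprod m Z * Z m"
  by (simp add: oprod_def)

lemma oprod_cong: "(\<And>i. i < m \<Longrightarrow> Z i = Z' i) \<Longrightarrow> oprod m Z = oprod m Z'"
  unfolding oprod_def by (intro arg_cong[where f = prod_list] map_cong) auto

lemma oprod_eq_0: "p < m \<Longrightarrow> Z p = (0::'a::ring_1) \<Longrightarrow> oprod m Z = 0"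
  by (induction m) (auto simp: oprod_Suc less_Suc_eq)

lemma sum_PiE_atLeast0LessThan_Suc:
  assumes "finite C"
  shows "(\<Sum>j\<in>{0..<Suc m} \<rightarrow>\<^sub>E C. G j) = (\<Sum>j\<in>{0..<m} \<rightarrow>\<^sub>E C. \<Sum>c\<in>C. G (j(m := c)))"
proof -
  have "{0..<Suc m} = insert m {0..<m}" by auto
  then have "(\<Sum>j\<in>{0..<Suc m} \<rightarrow>\<^sub>E C. G j) = (\<Sum>(c, j)\<in>C \<times> ({0..<m} \<rightarrow>\<^sub>E C). G (j(m := c)))"
    by (simp only: PiE_insert_eq) (subst sum.reindex, auto intro: inj_combinator, simp add: case_prod_unfold)
  also have "\<dots> = (\<Sum>j\<in>{0..<m} \<rightarrow>\<^sub>E C. \<Sum>c\<in>C. G (j(m := c)))"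
    by (simp add: sum.cartesian_product[symmetric] sum.swap[of _ C])
  finally show ?thesis .
qed

lemma oprod_sum_expand:
  fixes V :: "nat \<Rightarrow> 'c \<Rightarrow> 'u::complex_algebra_1"
  assumes "finite C"
  shows "oprod m (\<lambda>i. \<Sum>c\<in>C. \<gamma> i c *\<^sub>C V i c) =
    (\<Sum>j\<in>{0..<m} \<rightarrow>\<^sub>E C. (\<Prod>i<m. \<gamma> i (j i)) *\<^sub>C oprod m (\<lambda>i. V i (j i)))"
proof (induction m)
  case 0
  then show ?case by (simp add: oprod_def scaleC_one)
next
  case (Suc m)
  have upd: "(\<Prod>i<Suc m. \<gamma> i ((j(m := c)) i)) *\<^sub>C oprod (Suc m) (\<lambda>i. V i ((j(m := c)) i))
      = ((\<Prod>i<m. \<gamma> i (j i)) * \<gamma> m c) *\<^sub>C (oprod m (\<lambda>i. V i (j i)) * V m c)" for j c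
  proof -
    have "oprod m (\<lambda>i. V i ((j(m := c)) i)) = oprod m (\<lambda>i. V i (j i))"
      by (rule oprod_cong) simp
    then show ?thesis by (simp add: oprod_Suc)
  qed
  have "oprod (Suc m) (\<lambda>i. \<Sum>c\<in>C. \<gamma> i c *\<^sub>C V i c) =
      (\<Sum>j\<in>{0..<m} \<rightarrow>\<^sub>E C. (\<Prod>i<m. \<gamma> i (j i)) *\<^sub>C oprod m (\<lambda>i. V i (j i))) * (\<Sum>c\<in>C. \<gamma> m c *\<^sub>C V m c)"
    by (simp add: oprod_Suc Suc.IH)
  also have "\<dots> = (\<Sum>j\<in>{0..<m} \<rightarrow>\<^sub>E C. \<Sum>c\<in>C.
      ((\<Prod>i<m. \<gamma> i (j i)) * \<gamma> m c) *\<^sub>C (oprod m (\<lambda>i. V i (j i)) * V m c))"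
    by (simp add: sum_distrib_left sum_distrib_right mult_scaleC_left mult_scaleC_right scaleC_scaleC
        scaleC_sum_right mult.commute sum.swap[of _ C])
  also have "\<dots> = (\<Sum>j\<in>{0..<Suc m} \<rightarrow>\<^sub>E C. (\<Prod>i<Suc m. \<gamma> i (j i)) *\<^sub>C oprod (Suc m) (\<lambda>i. V i (j i)))"
    by (simp only: sum_PiE_atLeast0LessThan_Suc[OF assms] upd)
  finally show ?case .
qed

definition multilinear :: "nat \<Rightarrow> ((nat \<Rightarrow> 'a::complex_algebra_1) \<Rightarrow> complex) \<Rightarrow> bool" where
  "multilinear m F \<longleftrightarrow> (\<forall>Y Y'. (\<forall>i<m. Y i = Y' i) \<longrightarrow> F Y = F Y') \<and>
     (\<forall>(C::nat set) \<gamma> W. finite C \<longrightarrow>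
       F (\<lambda>i. \<Sum>c\<in>C. \<gamma> i c *\<^sub>C W c) = (\<Sum>j\<in>{0..<m} \<rightarrow>\<^sub>E C. (\<Prod>i<m. \<gamma> i (j i)) * F (\<lambda>i. W (j i))))"

lemma multilinearI:
  assumes "\<And>Y Y'. (\<And>i. i < m \<Longrightarrow> Y i = Y' i) \<Longrightarrow> F Y = F Y'"
    and "\<And>(C::nat set) \<gamma> W. finite C \<Longrightarrow>
      F (\<lambda>i. \<Sum>c\<in>C. \<gamma> i c *\<^sub>C W c) = (\<Sum>j\<in>{0..<m} \<rightarrow>\<^sub>E C. (\<Prod>i<m. \<gamma> i (j i)) * F (\<lambda>i. W (j i)))"
  shows "multilinear m F"
  unfolding multilinear_def using assms by blast

lemma multilinear_cong: "multilinear m F \<Longrightarrow> (\<And>i. i < m \<Longrightarrow> Y i = Y' i) \<Longrightarrow> F Y = F Y'"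
  unfolding multilinear_def by blast

lemma multilinear_expand:
  "multilinear m F \<Longrightarrow> finite (C::nat set) \<Longrightarrow>
     F (\<lambda>i. \<Sum>c\<in>C. \<gamma> i c *\<^sub>C W c) = (\<Sum>j\<in>{0..<m} \<rightarrow>\<^sub>E C. (\<Prod>i<m. \<gamma> i (j i)) * F (\<lambda>i. W (j i)))"
  unfolding multilinear_def by blast

lemma multilinear_oprod:
  assumes "ncps \<phi>" and "\<And>i. complex_linear (L i)"
  shows "multilinear m (\<lambda>Y. \<phi> (oprod m (\<lambda>i. L i (Y i))))"
proof (rule multilinearI)
  show "\<phi> (oprod m (\<lambda>i. L i (Y i))) = \<phi> (oprod m (\<lambda>i. L i (Y' i)))"
    if "\<And>i. i < m \<Longrightarrow> Y i = Y' i" for Y Y'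
    using that by (intro arg_cong[where f = \<phi>] oprod_cong) simp
qed (simp add: complex_linear_sum[OF assms(2)] oprod_sum_expand ncps_sum[OF assms(1)])

lemma multilinear_scale:
  assumes "multilinear m F"
  shows "multilinear m (\<lambda>Y. c * F Y)"
proof (rule multilinearI)
  show "c * F Y = c * F Y'" if "\<And>i. i < m \<Longrightarrow> Y i = Y' i" for Y Y'
    using multilinear_cong[OF assms that] by simp
qed (simp add: multilinear_expand[OF assms] sum_distrib_left mult.left_commute)

lemma multilinear_sum:
  assumes "\<And>s. s \<in> S \<Longrightarrow> multilinear m (F s)"
  shows "multilinear m (\<lambda>Y. \<Sum>s\<in>S. F s Y)"
proof (rule multilinearI)
  show "(\<Sum>s\<in>S. F s Y) = (\<Sum>s\<in>S. F s Y')" if "\<And>i. i < m \<Longrightarrow> Y i = Y' i" for Y Y'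
    using multilinear_cong[OF assms that] by (rule sum.cong[OF refl])
qed (simp add: multilinear_expand[OF assms] sum_distrib_left sum.swap[of _ S])

lemma multilinear_affine_expansion:
  fixes X :: "nat \<Rightarrow> 'a::complex_algebra_1"
  assumes F: "multilinear m F"
    and F_one: "\<And>Z p. p < m \<Longrightarrow> Z p = 1 \<Longrightarrow> F Z = 0"
    and Y: "\<And>i. Y i = (\<Sum>j<n. \<alpha> i j *\<^sub>C X j) + \<beta> i *\<^sub>C 1"
  shows "F Y = (\<Sum>j\<in>{0..<m} \<rightarrow>\<^sub>E {0..<n}. (\<Prod>i<m. \<alpha> i (j i)) * F (\<lambda>i. X (j i)))"
proof -
  define \<gamma> where "\<gamma> i c = (if c < n then \<alpha> i c else \<beta> i)" for i c
  define W where "W c = (if c < n then X c else 1)" for c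
  have Y_eq: "Y = (\<lambda>i. \<Sum>c\<in>insert n {..<n}. \<gamma> i c *\<^sub>C W c)"
    by (intro ext) (simp add: Y \<gamma>_def W_def add.commute)
  have "F Y = (\<Sum>j\<in>{0..<m} \<rightarrow>\<^sub>E insert n {..<n}. (\<Prod>i<m. \<gamma> i (j i)) * F (\<lambda>i. W (j i)))"
    unfolding Y_eq by (rule multilinear_expand[OF F]) simp
  also have "\<dots> = (\<Sum>j\<in>{0..<m} \<rightarrow>\<^sub>E {0..<n}. (\<Prod>i<m. \<gamma> i (j i)) * F (\<lambda>i. W (j i)))"
  proof (rule sum.mono_neutral_right)
    show "{0..<m} \<rightarrow>\<^sub>E {0..<n} \<subseteq> {0..<m} \<rightarrow>\<^sub>E insert n {..<n}"
      by (rule PiE_mono) auto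
    show "\<forall>j\<in>({0..<m} \<rightarrow>\<^sub>E insert n {..<n}) - ({0..<m} \<rightarrow>\<^sub>E {0..<n}).
        (\<Prod>i<m. \<gamma> i (j i)) * F (\<lambda>i. W (j i)) = 0"
    proof
      fix j assume "j \<in> ({0..<m} \<rightarrow>\<^sub>E insert n {..<n}) - ({0..<m} \<rightarrow>\<^sub>E {0..<n})"
      then obtain p where "p < m" "j p = n"
        by (auto simp: PiE_iff)
      then show "(\<Prod>i<m. \<gamma> i (j i)) * F (\<lambda>i. W (j i)) = 0"
        using F_one[of p "\<lambda>i. W (j i)"] by (simp add: W_def)
    qed
  qed (auto intro: finite_PiE)
  also have "\<dots> = (\<Sum>j\<in>{0..<m} \<rightarrow>\<^sub>E {0..<n}. (\<Prod>i<m. \<alpha> i (j i)) * F (\<lambda>i. X (j i)))"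
  proof (rule sum.cong[OF refl])
    fix j assume j: "j \<in> {0..<m} \<rightarrow>\<^sub>E {0..<n}"
    then have "F (\<lambda>i. W (j i)) = F (\<lambda>i. X (j i))"
      by (intro multilinear_cong[OF F]) (auto simp: PiE_iff W_def)
    moreover have "(\<Prod>i<m. \<gamma> i (j i)) = (\<Prod>i<m. \<alpha> i (j i))"
      using j by (intro prod.cong) (auto simp: PiE_iff \<gamma>_def)
    ultimately show "(\<Prod>i<m. \<gamma> i (j i)) * F (\<lambda>i. W (j i)) = (\<Prod>i<m. \<alpha> i (j i)) * F (\<lambda>i. X (j i))"
      by (simp only:)
  qed
  finally show ?thesis .
qed

section \<open>The Moebius function of a finite poset\<close>

locale finite_poset =
  fixes P :: "'p set" and le :: "'p \<Rightarrow> 'p \<Rightarrow> bool"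
  assumes finite_carrier: "finite P"
    and reflexive: "x \<in> P \<Longrightarrow> le x x"
    and transitive: "x \<in> P \<Longrightarrow> y \<in> P \<Longrightarrow> z \<in> P \<Longrightarrow> le x y \<Longrightarrow> le y z \<Longrightarrow> le x z"
    and antisymmetric: "x \<in> P \<Longrightarrow> y \<in> P \<Longrightarrow> le x y \<Longrightarrow> le y x \<Longrightarrow> x = y"
begin

definition icc :: "'p \<Rightarrow> 'p \<Rightarrow> 'p set" where
  "icc x y = {z\<in>P. le x z \<and> le z y}"

lemma finite_icc [simp]: "finite (icc x y)"
  using finite_carrier unfolding icc_def by simp

lemma icc_empty: "x \<in> P \<Longrightarrow> y \<in> P \<Longrightarrow> \<not> le x y \<Longrightarrow> icc x y = {}"
  unfolding icc_def using transitive by blast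

lemma card_icc_less:
  assumes "x \<in> P" "y \<in> P" "z \<in> icc x y" "z \<noteq> y"
  shows "card (icc x z) < card (icc x y)"
proof (rule psubset_card_mono)
  show "icc x z \<subset> icc x y"
    using assms reflexive transitive antisymmetric unfolding icc_def by blast
qed simp

lemma dual: "finite_poset P (\<lambda>x y. le y x)"
  by unfold_locales (use finite_carrier reflexive transitive antisymmetric in blast)+

lemma moeb_fuel_stable:
  assumes "x \<in> P" "y \<in> P" "card (icc x y) \<le> k" "card (icc x y) \<le> k'"
  shows "moeb_fuel k P le x y = moeb_fuel k' P le x y"
  using assms(2-)
proof (induction k arbitrary: k' y)
  case 0
  then have "icc x y = {}" by simp
  then have "\<not> le x y" "x \<noteq> y"
    using \<open>x \<in> P\<close> reflexive by (auto simp: icc_def)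
  then show ?case by (cases k') simp_all
next
  case (Suc k)
  show ?case
  proof (cases k')
    case 0
    with Suc.prems have "icc x y = {}" by simp
    then have "\<not> le x y" "x \<noteq> y"
      using \<open>x \<in> P\<close> reflexive by (auto simp: icc_def)
    then show ?thesis using 0 by simp
  next
    case (Suc k'')
    have "moeb_fuel k P le x z = moeb_fuel k'' P le x z" if "z \<in> icc x y" "z \<noteq> y" for z
      using card_icc_less[OF \<open>x \<in> P\<close> \<open>y \<in> P\<close> that] that Suc.prems \<open>k' = Suc k''\<close>
      by (intro Suc.IH) (auto simp: icc_def)
    then show ?thesis
      using \<open>k' = Suc k''\<close> by (auto simp: icc_def intro!: sum.cong)
  qed
qed

lemma moebius_rec:
  assumes "x \<in> P" "y \<in> P"
  shows "moebius P le x y = (if x = y then 1 else if le x y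
    then - (\<Sum>z\<in>icc x y - {y}. moebius P le x z) else 0)"
proof -
  obtain k where k: "card P = Suc k"
    using assms finite_carrier by (cases "card P") auto
  have card_le: "card (icc x w) \<le> card P" for w
    using finite_carrier by (auto simp: icc_def intro: card_mono)
  have "moeb_fuel k P le x z = moebius P le x z" if "z \<in> icc x y - {y}" for z
    unfolding moebius_def using that card_icc_less[OF assms, of z] card_le[of y] card_le[of z] k
    by (intro moeb_fuel_stable[OF assms(1)]) (auto simp: icc_def)
  moreover have "icc x y - {y} = {z\<in>P. le x z \<and> le z y \<and> z \<noteq> y}"
    by (auto simp: icc_def)
  ultimately show ?thesis
    unfolding moebius_def k by (auto intro!: sum.cong)
qed

lemma icc_same: "x \<in> P \<Longrightarrow> icc x x = {x}"
  using reflexive antisymmetric by (auto simp: icc_def)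

lemma sum_moebius_left:
  assumes "x \<in> P" "y \<in> P"
  shows "(\<Sum>z\<in>icc x y. moebius P le x z) = (if x = y then 1 else 0)"
proof -
  consider "x = y" | "x \<noteq> y" "le x y" | "\<not> le x y"
    by blast
  then show ?thesis
  proof cases
    case 1
    then show ?thesis using moebius_rec[OF assms] icc_same[OF assms(1)] by simp
  next
    case 2
    then have "y \<in> icc x y"
      using assms reflexive by (auto simp: icc_def)
    then show ?thesis
      using moebius_rec[OF assms] 2 by (simp add: sum.remove)
  next
    case 3
    then show ?thesis
      using icc_empty[OF assms] assms reflexive by auto
  qed
qed

lemma sum_icc_swap:
  assumes "x \<in> P" "y \<in> P"
  shows "(\<Sum>z\<in>icc x y. \<Sum>w\<in>icc z y. F z w) = (\<Sum>w\<in>icc x y. \<Sum>z\<in>icc x w. F z w)"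
proof -
  have "(\<Sum>z\<in>icc x y. \<Sum>w\<in>icc z y. F z w) = (\<Sum>z\<in>icc x y. \<Sum>w\<in>{w\<in>icc x y. le z w}. F z w)"
    using assms transitive by (intro sum.cong refl) (auto simp: icc_def)
  also have "\<dots> = (\<Sum>w\<in>icc x y. \<Sum>z\<in>{z\<in>icc x y. le z w}. F z w)"
    by (rule sum.swap_restrict) simp_all
  also have "\<dots> = (\<Sum>w\<in>icc x y. \<Sum>z\<in>icc x w. F z w)"
    using assms transitive by (intro sum.cong refl) (auto simp: icc_def)
  finally show ?thesis .
qed

lemma moebius_dual:
  assumes "x \<in> P" "y \<in> P"
  shows "moebius P le x y = moebius P (\<lambda>a b. le b a) y x"
proof -
  interpret D: finite_poset P "\<lambda>a b. le b a" by (rule dual)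
  have D_icc: "D.icc y z = icc z y" for y z
    by (auto simp: icc_def D.icc_def)
  let ?\<mu>' = "\<lambda>w. moebius P (\<lambda>a b. le b a) y w"
  show ?thesis
  proof (cases "le x y")
    case False
    then have "x \<noteq> y" using assms reflexive by blast
    then show ?thesis
      using False moebius_rec[OF assms] D.moebius_rec[OF assms(2,1)] by simp
  next
    case True
    then have x_mem: "x \<in> icc x y" and y_mem: "y \<in> icc x y"
      using assms reflexive by (auto simp: icc_def)
    have "moebius P le x y = (\<Sum>z\<in>icc x y. moebius P le x z * (if z = y then 1 else 0))"
      using y_mem by (simp add: if_distrib sum.delta' cong: if_cong)
    also have "\<dots> = (\<Sum>z\<in>icc x y. \<Sum>w\<in>icc z y. moebius P le x z * ?\<mu>' w)"
      using D.sum_moebius_left[OF assms(2)]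
      by (intro sum.cong refl) (auto simp: D_icc icc_def sum_distrib_left[symmetric])
    also have "\<dots> = (\<Sum>w\<in>icc x y. \<Sum>z\<in>icc x w. moebius P le x z * ?\<mu>' w)"
      by (rule sum_icc_swap[OF assms])
    also have "\<dots> = (\<Sum>w\<in>icc x y. if x = w then ?\<mu>' w else 0)"
      using sum_moebius_left[OF assms(1)]
      by (intro sum.cong refl) (auto simp: icc_def sum_distrib_right[symmetric])
    also have "\<dots> = ?\<mu>' x"
      using x_mem by (simp add: sum.delta)
    finally show ?thesis .
  qed
qed

lemma sum_moebius_right:
  assumes "x \<in> P" "y \<in> P"
  shows "(\<Sum>z\<in>icc x y. moebius P le z y) = (if x = y then 1 else 0)"
proof -
  interpret D: finite_poset P "\<lambda>a b. le b a" by (rule dual)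
  have "icc x y = D.icc y x"
    by (auto simp: icc_def D.icc_def)
  then have "(\<Sum>z\<in>icc x y. moebius P le z y) = (\<Sum>z\<in>D.icc y x. moebius P (\<lambda>a b. le b a) y z)"
    using assms(2) by (auto simp: icc_def intro!: sum.cong moebius_dual)
  then show ?thesis
    using D.sum_moebius_left[OF assms(2,1)] by auto
qed

lemma upper_sums_zero_imp_zero:
  assumes "T \<subseteq> P" and upper_sums: "\<And>z. z \<in> T \<Longrightarrow> (\<Sum>c\<in>{c\<in>T. le z c}. g c) = 0"
  shows "b \<in> T \<Longrightarrow> g b = 0"
proof (induction "card {c\<in>T. le b c}" arbitrary: b rule: less_induct)
  case (less b)
  let ?U = "{c\<in>T. le b c}"
  have fin: "finite ?U"
    using assms(1) finite_carrier by (auto intro: finite_subset)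
  have "g c = 0" if c: "c \<in> ?U - {b}" for c
  proof (rule less.hyps)
    have "{d\<in>T. le c d} \<subseteq> ?U"
      using c less.prems assms(1) transitive by blast
    moreover have "b \<notin> {d\<in>T. le c d}"
      using c less.prems assms(1) antisymmetric by blast
    ultimately show "card {d\<in>T. le c d} < card ?U"
      using less.prems assms(1) reflexive by (intro psubset_card_mono fin) blast
  qed (use c in simp)
  then have "(\<Sum>c\<in>?U. g c) = g b"
    using less.prems assms(1) reflexive fin by (subst sum.remove[of _ b]) auto
  then show "g b = 0"
    using upper_sums[OF less.prems] by simp
qed

text \<open>Weisner's theorem, with \<open>r \<sigma>\<close> playing the role of the meet of \<open>\<sigma>\<close> and \<open>a\<close>.\<close>

theorem weisner:
  assumes t: "t \<in> P" and not_le: "\<not> le t a"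
    and r_mem: "\<And>\<sigma>. \<sigma> \<in> P \<Longrightarrow> r \<sigma> \<in> P"
    and r_glb: "\<And>\<sigma> z. \<sigma> \<in> P \<Longrightarrow> z \<in> P \<Longrightarrow> le z (r \<sigma>) \<longleftrightarrow> le z \<sigma> \<and> le z a"
  shows "(\<Sum>\<sigma>\<in>{\<sigma>\<in>P. le \<sigma> t}. f (r \<sigma>) * of_int (moebius P le \<sigma> t) :: 'a::comm_ring_1) = 0"
proof -
  define Q where "Q = {\<sigma>\<in>P. le \<sigma> t}"
  define T where "T = {z\<in>P. le z a}"
  define g :: "'p \<Rightarrow> 'a" where "g b = (\<Sum>\<sigma>\<in>{\<sigma>\<in>Q. r \<sigma> = b}. of_int (moebius P le \<sigma> t))" for b
  have fin: "finite Q" "finite T"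
    using finite_carrier by (simp_all add: Q_def T_def)
  have r_T: "r \<sigma> \<in> T" if "\<sigma> \<in> Q" for \<sigma>
    using that r_mem r_glb reflexive by (auto simp: Q_def T_def)
  have "(\<Sum>c\<in>{c\<in>T. le z c}. g c) = 0" if z: "z \<in> T" for z
  proof -
    have "(\<Sum>c\<in>{c\<in>T. le z c}. g c) =
        (\<Sum>c\<in>{c\<in>T. le z c}. \<Sum>\<sigma>\<in>{\<sigma>\<in>{\<sigma>\<in>Q. le z (r \<sigma>)}. r \<sigma> = c}. of_int (moebius P le \<sigma> t))"
      unfolding g_def by (intro sum.cong refl) auto
    also have "\<dots> = (\<Sum>\<sigma>\<in>{\<sigma>\<in>Q. le z (r \<sigma>)}. of_int (moebius P le \<sigma> t))"
      using fin r_T by (intro sum.group) auto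
    also have "{\<sigma>\<in>Q. le z (r \<sigma>)} = icc z t"
      using z r_glb by (auto simp: Q_def T_def icc_def)
    also have "(\<Sum>\<sigma>\<in>icc z t. of_int (moebius P le \<sigma> t)) = (0::'a)"
      using z t not_le sum_moebius_right[of z t] by (auto simp: T_def simp flip: of_int_sum)
    finally show ?thesis .
  qed
  then have g_0: "g c = 0" if "c \<in> T" for c
    using upper_sums_zero_imp_zero[of T g c] that by (auto simp: T_def)
  have "(\<Sum>\<sigma>\<in>Q. f (r \<sigma>) * of_int (moebius P le \<sigma> t)) =
      (\<Sum>c\<in>T. \<Sum>\<sigma>\<in>{\<sigma>\<in>Q. r \<sigma> = c}. f (r \<sigma>) * of_int (moebius P le \<sigma> t))"
    using fin r_T by (intro sum.group[symmetric]) auto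
  also have "\<dots> = (\<Sum>c\<in>T. f c * g c)"
    unfolding g_def by (simp add: sum_distrib_left)
  finally show ?thesis
    using g_0 by (simp add: Q_def)
qed

end

section \<open>Exchangeability\<close>

lemma inj_on_extends_to_bij:
  fixes f :: "'a \<Rightarrow> 'a"
  assumes "finite A" "inj_on f A"
  obtains g where "bij g" "\<And>x. x \<in> A \<Longrightarrow> g x = f x"
proof -
  define S where "S = A \<union> f ` A"
  have "finite S" using assms(1) by (simp add: S_def)
  moreover have "card (S - A) = card (S - f ` A)"
    using assms by (simp add: S_def card_Diff_subset card_image)
  ultimately obtain h where h: "bij_betw h (S - A) (S - f ` A)"
    using finite_same_card_bij by (metis finite_Diff)
  define g where "g x = (if x \<in> A then f x else if x \<in> S then h x else x)" for x
  have "bij_betw g A (f ` A)"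
    using assms(2) by (simp add: bij_betw_def inj_on_def image_def g_def)
  moreover have "bij_betw g (S - A) (S - f ` A)"
    using h by (rule bij_betw_cong[THEN iffD1, rotated]) (simp add: g_def)
  moreover have "bij_betw g (- S) (- S)"
    by (rule bij_betw_cong[THEN iffD1, of _ id]) (auto simp: g_def S_def)
  ultimately have "bij_betw g (A \<union> (S - A) \<union> - S) (f ` A \<union> (S - f ` A) \<union> - S)"
    by (intro bij_betw_combine) (auto simp: S_def)
  moreover have "A \<union> (S - A) \<union> - S = UNIV" "f ` A \<union> (S - f ` A) \<union> - S = UNIV"
    by (auto simp: S_def)
  ultimately have "bij g" by simp
  then show ?thesis
    using that by (simp add: g_def)
qed

lemma same_kernel_imp_ex_bij:
  fixes f g :: "'a \<Rightarrow> 'b"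
  assumes "finite S" and kernel: "\<And>i j. i \<in> S \<Longrightarrow> j \<in> S \<Longrightarrow> f i = f j \<longleftrightarrow> g i = g j"
  obtains \<beta> where "bij \<beta>" "\<And>i. i \<in> S \<Longrightarrow> \<beta> (f i) = g i"
proof -
  define h where "h x = g (inv_into S f x)" for x
  have h_f: "h (f i) = g i" if "i \<in> S" for i
    unfolding h_def using that kernel inv_into_into[of "f i" f S] f_inv_into_f[of "f i" f S] by auto
  have "inj_on h (f ` S)"
    by (auto simp: inj_on_def h_f kernel)
  then obtain \<beta> where "bij \<beta>" "\<And>x. x \<in> f ` S \<Longrightarrow> \<beta> x = h x"
    using inj_on_extends_to_bij assms(1) by blast
  then show ?thesis
    using that h_f by auto
qed

lemma exch_system_hom: "exch_system \<phi> \<phi>t \<iota> \<Longrightarrow> unital_alg_hom (\<iota> k)"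
  unfolding exch_system_def by blast

lemma exch_system_same_kernel:
  assumes ex: "exch_system \<phi> \<phi>t \<iota>"
    and kernel: "\<And>i j. i < m \<Longrightarrow> j < m \<Longrightarrow> Z i \<noteq> 1 \<Longrightarrow> Z j \<noteq> 1 \<Longrightarrow> idx i = idx j \<longleftrightarrow> idx' i = idx' j"
  shows "\<phi>t (oprod m (\<lambda>j. \<iota> (idx j) (Z j))) = \<phi>t (oprod m (\<lambda>j. \<iota> (idx' j) (Z j)))"
proof -
  obtain \<beta> where \<beta>: "bij \<beta>" "\<And>i. i \<in> {i. i < m \<and> Z i \<noteq> 1} \<Longrightarrow> \<beta> (idx i) = idx' i"
    using same_kernel_imp_ex_bij[of "{i. i < m \<and> Z i \<noteq> 1}" idx idx'] kernel by auto
  have "\<phi>t (oprod m (\<lambda>j. \<iota> (idx j) (Z j))) = \<phi>t (oprod m (\<lambda>j. \<iota> (\<beta> (idx j)) (Z j)))"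
    using ex \<beta>(1) unfolding exch_system_def by blast
  also have "oprod m (\<lambda>j. \<iota> (\<beta> (idx j)) (Z j)) = oprod m (\<lambda>j. \<iota> (idx' j) (Z j))"
  proof (rule oprod_cong)
    fix i assume "i < m"
    then show "\<iota> (\<beta> (idx i)) (Z i) = \<iota> (idx' i) (Z i)"
      using \<beta>(2)[of i] exch_system_hom[OF ex] by (cases "Z i = 1") (auto simp: unital_alg_hom_def)
  qed
  finally show ?thesis .
qed

section \<open>The partition lattice\<close>

lemma finite_Pi_set: "finite (Pi_set m)"
  unfolding Pi_set_def by (rule finitely_many_partition_on) simp

lemma finite_poset_Pi_set: "finite_poset (Pi_set m) refines"
proof
  show "finite (Pi_set m)" by (rule finite_Pi_set)
  show "refines \<sigma> \<sigma>" for \<sigma>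
    unfolding refines_def by blast
  show "refines \<sigma> \<tau>" if "refines \<sigma> \<rho>" "refines \<rho> \<tau>" for \<sigma> \<rho> \<tau>
    using that unfolding refines_def by (meson order_trans)
  show "\<sigma> = \<tau>" if "\<sigma> \<in> Pi_set m" "\<tau> \<in> Pi_set m" "refines \<sigma> \<tau>" "refines \<tau> \<sigma>" for \<sigma> \<tau>
    using that Disjoint_Sets.refines_asym[of "{0..<m}" \<sigma> \<tau>]
    unfolding Pi_set_def Disjoint_Sets.refines_def refines_def by blast
qed

lemma Pi_set_partition_on: "\<sigma> \<in> Pi_set m \<Longrightarrow> partition_on {0..<m} \<sigma>"
  by (simp add: Pi_set_def)

lemma Pi_set_block_unique:
  assumes "\<sigma> \<in> Pi_set m" "B \<in> \<sigma>" "C \<in> \<sigma>" "i \<in> B" "i \<in> C"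
  shows "B = C"
  using disjointD[OF partition_onD2[OF Pi_set_partition_on[OF assms(1)]] assms(2,3)] assms(4,5)
  by blast

lemma Pi_set_block_exists:
  assumes "\<sigma> \<in> Pi_set m" "i < m"
  shows "\<exists>B\<in>\<sigma>. i \<in> B"
proof -
  have "i \<in> \<Union>\<sigma>"
    using assms(2) by (simp add: partition_onD1[OF Pi_set_partition_on[OF assms(1)], symmetric])
  then show ?thesis by blast
qed

lemma Pi_set_block_subset:
  assumes "\<sigma> \<in> Pi_set m" "B \<in> \<sigma>"
  shows "B \<subseteq> {0..<m}"
  using partition_onD1[OF Pi_set_partition_on[OF assms(1)]] assms(2) by blast

lemma Pi_set_block_finite: "\<sigma> \<in> Pi_set m \<Longrightarrow> B \<in> \<sigma> \<Longrightarrow> finite B"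
  by (rule finite_subset[OF Pi_set_block_subset]) simp_all

lemma part_index_eq_Min:
  assumes "\<sigma> \<in> Pi_set m" "B \<in> \<sigma>" "i \<in> B"
  shows "part_index \<sigma> i = Min B"
proof -
  have "(THE B. B \<in> \<sigma> \<and> i \<in> B) = B"
    using assms Pi_set_block_unique[OF assms(1)] by (intro the_equality) auto
  then show ?thesis by (simp add: part_index_def)
qed

lemma part_index_eq_iff:
  assumes "\<sigma> \<in> Pi_set m" "i < m" "j < m"
  shows "part_index \<sigma> i = part_index \<sigma> j \<longleftrightarrow> (\<exists>B\<in>\<sigma>. i \<in> B \<and> j \<in> B)"
proof -
  obtain Bi Bj where B: "Bi \<in> \<sigma>" "i \<in> Bi" "Bj \<in> \<sigma>" "j \<in> Bj"
    using Pi_set_block_exists[OF assms(1)] assms(2,3) by metis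
  have idx: "part_index \<sigma> i = Min Bi" "part_index \<sigma> j = Min Bj"
    using B part_index_eq_Min[OF assms(1)] by auto
  show ?thesis
  proof
    assume "part_index \<sigma> i = part_index \<sigma> j"
    moreover have "Min Bi \<in> Bi" "Min Bj \<in> Bj"
      using B Pi_set_block_finite[OF assms(1)] by (auto intro!: Min_in)
    ultimately have "Bi = Bj"
      using idx Pi_set_block_unique[OF assms(1) B(1,3)] by simp
    then show "\<exists>B\<in>\<sigma>. i \<in> B \<and> j \<in> B"
      using B by blast
  next
    assume "\<exists>B\<in>\<sigma>. i \<in> B \<and> j \<in> B"
    then have "Bi = Bj"
      using B Pi_set_block_unique[OF assms(1)] by metis
    then show "part_index \<sigma> i = part_index \<sigma> j"
      using idx by simp
  qed
qed

definition isolate :: "nat \<Rightarrow> nat set set \<Rightarrow> nat set set" where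
  "isolate p \<sigma> = insert {p} ((\<lambda>B. B - {p}) ` \<sigma> - {{}})"

lemma isolate_mem_Pi_set:
  assumes "\<sigma> \<in> Pi_set m" "p < m"
  shows "isolate p \<sigma> \<in> Pi_set m"
  unfolding Pi_set_def mem_Collect_eq
proof (rule partition_onI)
  show "\<Union>(isolate p \<sigma>) = {0..<m}"
    using partition_onD1[OF Pi_set_partition_on[OF assms(1)]] assms(2) unfolding isolate_def by auto
  show "{} \<notin> isolate p \<sigma>"
    unfolding isolate_def by auto
  show "disjnt B C" if BC: "B \<in> isolate p \<sigma>" "C \<in> isolate p \<sigma>" "B \<noteq> C" for B C
  proof (cases "B = {p} \<or> C = {p}")
    case True
    then show ?thesis
      using BC unfolding isolate_def disjnt_def by auto
  next
    case False
    then obtain B0 C0 where "B0 \<in> \<sigma>" "C0 \<in> \<sigma>" "B = B0 - {p}" "C = C0 - {p}"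
      using False BC unfolding isolate_def by blast
    then show ?thesis
      using Pi_set_block_unique[OF assms(1)] BC(3) unfolding disjnt_def by blast
  qed
qed

lemma refines_isolate_iff:
  assumes "z \<in> Pi_set m" "\<sigma> \<in> Pi_set m" "p < m"
  shows "refines z (isolate p \<sigma>) \<longleftrightarrow> refines z \<sigma> \<and> refines z {{p}, {0..<m} - {p}}"
proof
  have "refines (isolate p \<sigma>) \<sigma>" "refines (isolate p \<sigma>) {{p}, {0..<m} - {p}}"
    using Pi_set_block_exists[OF assms(2,3)] Pi_set_block_subset[OF assms(2)]
    unfolding refines_def isolate_def by auto
  then show "refines z (isolate p \<sigma>) \<Longrightarrow> refines z \<sigma> \<and> refines z {{p}, {0..<m} - {p}}"
    unfolding refines_def by (meson order_trans)
next
  assume *: "refines z \<sigma> \<and> refines z {{p}, {0..<m} - {p}}"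
  show "refines z (isolate p \<sigma>)"
    unfolding refines_def
  proof
    fix B assume B: "B \<in> z"
    then obtain C where C: "C \<in> \<sigma>" "B \<subseteq> C"
      using * unfolding refines_def by blast
    have "B \<noteq> {}"
      using partition_onD3[OF Pi_set_partition_on[OF assms(1)]] B by blast
    moreover have "B \<subseteq> {p} \<or> B \<subseteq> {0..<m} - {p}"
      using * B unfolding refines_def by blast
    ultimately have "B = {p} \<or> (B \<subseteq> C - {p} \<and> C - {p} \<noteq> {})"
      using C by blast
    then show "\<exists>C'\<in>isolate p \<sigma>. B \<subseteq> C'"
      using C unfolding isolate_def by blast
  qed
qed

lemma isolate_same_block_iff:
  assumes "i \<noteq> p" "j \<noteq> p"
  shows "(\<exists>B\<in>isolate p \<sigma>. i \<in> B \<and> j \<in> B) \<longleftrightarrow> (\<exists>B\<in>\<sigma>. i \<in> B \<and> j \<in> B)"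
proof
  assume "\<exists>B\<in>isolate p \<sigma>. i \<in> B \<and> j \<in> B"
  then obtain B where "B \<in> isolate p \<sigma>" "i \<in> B" "j \<in> B" by blast
  moreover from this have "B \<noteq> {p}"
    using assms by blast
  ultimately obtain C where "C \<in> \<sigma>" "i \<in> C" "j \<in> C"
    unfolding isolate_def by blast
  then show "\<exists>B\<in>\<sigma>. i \<in> B \<and> j \<in> B" by blast
next
  assume "\<exists>B\<in>\<sigma>. i \<in> B \<and> j \<in> B"
  then obtain B where "B \<in> \<sigma>" "i \<in> B" "j \<in> B" by blast
  then have "B - {p} \<in> isolate p \<sigma>"
    using assms unfolding isolate_def by auto
  then show "\<exists>B\<in>isolate p \<sigma>. i \<in> B \<and> j \<in> B"
    using \<open>i \<in> B\<close> \<open>j \<in> B\<close> assms by (intro bexI[of _ "B - {p}"]) simp_all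
qed

lemma phi_part_isolate:
  assumes ex: "exch_system \<phi> \<phi>t \<iota>" and "\<sigma> \<in> Pi_set m" "p < m" "Z p = 1"
  shows "phi_part \<phi>t \<iota> m (isolate p \<sigma>) Z = phi_part \<phi>t \<iota> m \<sigma> Z"
  unfolding phi_part_def
proof (rule exch_system_same_kernel[OF ex])
  fix i j assume ij: "i < m" "j < m" and "Z i \<noteq> 1" "Z j \<noteq> 1"
  then have "i \<noteq> p" "j \<noteq> p"
    using assms(4) by auto
  then show "part_index (isolate p \<sigma>) i = part_index (isolate p \<sigma>) j \<longleftrightarrow> part_index \<sigma> i = part_index \<sigma> j"
    using part_index_eq_iff[OF isolate_mem_Pi_set[OF assms(2,3)] ij] part_index_eq_iff[OF assms(2) ij]
      isolate_same_block_iff by simp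
qed

lemma not_refines_singleton_split:
  assumes "\<pi> \<in> Pi_set m" "p < m" "{p} \<notin> \<pi>"
  shows "\<not> refines \<pi> {{p}, {0..<m} - {p}}"
proof
  assume "refines \<pi> {{p}, {0..<m} - {p}}"
  moreover obtain B where "B \<in> \<pi>" "p \<in> B"
    using Pi_set_block_exists[OF assms(1,2)] by blast
  ultimately have "B = {p}"
    unfolding refines_def by blast
  with \<open>B \<in> \<pi>\<close> assms(3) show False by simp
qed

section \<open>Cumulants with a unit argument\<close>

lemma exch_system_ncps: "exch_system \<phi> \<phi>t \<iota> \<Longrightarrow> ncps \<phi>t"
  unfolding exch_system_def by blast

lemma primitive_root_sum_powers:
  assumes "primitive_root m \<omega>" "2 \<le> m"
  shows "(\<Sum>k=1..m. \<omega> ^ k) = 0"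
proof -
  have "\<omega> \<noteq> 1"
    using assms(2) spec[OF conjunct2[OF assms(1)[unfolded primitive_root_def]], of 1] by simp
  have "(\<Sum>k=1..m. \<omega> ^ k) = \<omega> * (\<Sum>k<m. \<omega> ^ k)"
    by (simp add: sum.atLeast1_atMost_eq sum_distrib_left)
  also have "\<dots> = \<omega> * ((\<omega> ^ m - 1) / (\<omega> - 1))"
    using \<open>\<omega> \<noteq> 1\<close> by (simp add: geometric_sum)
  also have "\<dots> = 0"
    using assms(1) unfolding primitive_root_def by simp
  finally show ?thesis .
qed

lemma omega_lift_one:
  assumes "exch_system \<phi> \<phi>t \<iota>" "primitive_root m \<omega>" "2 \<le> m"
  shows "omega_lift \<iota> m \<omega> 1 = 0"
proof -
  have "\<iota> k 1 = 1" for k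
    using exch_system_hom[OF assms(1)] unfolding unital_alg_hom_def by blast
  then have "omega_lift \<iota> m \<omega> 1 = (\<Sum>k=1..m. \<omega> ^ k) *\<^sub>C 1"
    unfolding omega_lift_def by (simp add: scaleC_sum_left)
  then show ?thesis
    using primitive_root_sum_powers[OF assms(2,3)] by simp
qed

lemma ncK_eq_0_if_one:
  assumes "exch_system \<phi> \<phi>t \<iota>" "primitive_root m \<omega>" "2 \<le> m" "p < m" "Z p = 1"
  shows "ncK \<phi>t \<iota> m \<omega> Z = 0"
proof -
  have "oprod m (\<lambda>i. omega_lift \<iota> m \<omega> (Z i)) = 0"
    using assms(4,5) omega_lift_one[OF assms(1-3)] by (intro oprod_eq_0) auto
  then show ?thesis
    unfolding ncK_def using ncps_zero[OF exch_system_ncps[OF assms(1)]] by simp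
qed

lemma ncKpi_eq_0_if_one:
  assumes ex: "exch_system \<phi> \<phi>t \<iota>" and \<pi>: "\<pi> \<in> Pi_set m" "{p} \<notin> \<pi>"
    and p: "p < m" "Z p = 1"
  shows "ncKpi \<phi>t \<iota> m \<pi> Z = 0"
proof -
  interpret Pi: finite_poset "Pi_set m" refines
    by (rule finite_poset_Pi_set)
  have "ncKpi \<phi>t \<iota> m \<pi> Z = (\<Sum>\<sigma>\<in>{\<sigma>\<in>Pi_set m. refines \<sigma> \<pi>}.
      phi_part \<phi>t \<iota> m (isolate p \<sigma>) Z * of_int (moebius (Pi_set m) refines \<sigma> \<pi>))"
    unfolding ncKpi_def mu_Pi_def using phi_part_isolate[OF ex] p by simp
  also have "\<dots> = 0"
    using \<pi> p not_refines_singleton_split isolate_mem_Pi_set refines_isolate_iff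
    by (intro Pi.weisner[where a = "{{p}, {0..<m} - {p}}" and f = "\<lambda>\<sigma>. phi_part \<phi>t \<iota> m \<sigma> Z"]) auto
  finally show ?thesis .
qed

lemma multilinear_ncK:
  assumes "exch_system \<phi> \<phi>t \<iota>"
  shows "multilinear m (ncK \<phi>t \<iota> m \<omega>)"
proof -
  have "complex_linear (\<iota> k)" for k
    using exch_system_hom[OF assms] by (rule unital_alg_hom_imp_complex_linear)
  then have "multilinear m (\<lambda>Y. \<phi>t (oprod m (\<lambda>i. omega_lift \<iota> m \<omega> (Y i))))"
    by (intro multilinear_oprod exch_system_ncps[OF assms] complex_linear_omega_lift)
  then show ?thesis
    unfolding ncK_def[abs_def] by (rule multilinear_scale)
qed

lemma multilinear_ncKpi:
  assumes "exch_system \<phi> \<phi>t \<iota>"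
  shows "multilinear m (ncKpi \<phi>t \<iota> m \<pi>)"
proof -
  have "complex_linear (\<iota> k)" for k
    using exch_system_hom[OF assms] by (rule unital_alg_hom_imp_complex_linear)
  then have "multilinear m (\<lambda>Y. c * phi_part \<phi>t \<iota> m \<sigma> Y)" for c \<sigma>
    unfolding phi_part_def by (intro multilinear_scale multilinear_oprod exch_system_ncps[OF assms])
  then show ?thesis
    unfolding ncKpi_def[abs_def] by (subst mult.commute) (rule multilinear_sum)
qed

theorem proposition3p1:
  fixes \<phi> :: "'a::complex_algebra_1 \<Rightarrow> complex"
    and \<phi>t :: "'u::complex_algebra_1 \<Rightarrow> complex"
    and \<iota> :: "nat \<Rightarrow> 'a \<Rightarrow> 'u"
    and X :: "nat \<Rightarrow> 'a" and \<alpha> :: "nat \<Rightarrow> nat \<Rightarrow> complex" and \<beta> :: "nat \<Rightarrow> complex"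
    and n m :: nat and \<omega> :: complex and Y :: "nat \<Rightarrow> 'a"
  assumes "exch_system \<phi> \<phi>t \<iota>"
    and "\<And>i. Y i = (\<Sum>j<n. \<alpha> i j *\<^sub>C X j) + \<beta> i *\<^sub>C 1"
    and "m \<ge> 2"
  shows "(primitive_root m \<omega> \<longrightarrow>
            ncK \<phi>t \<iota> m \<omega> Y =
            (\<Sum>j\<in>{0..<m} \<rightarrow>\<^sub>E {0..<n}. (\<Prod>i<m. \<alpha> i (j i)) * ncK \<phi>t \<iota> m \<omega> (\<lambda>i. X (j i))))
         \<and> (\<forall>\<pi>\<in>Pi_set m. (\<forall>B\<in>\<pi>. \<not> (\<exists>x. B = {x})) \<longrightarrow>
            ncKpi \<phi>t \<iota> m \<pi> Y =
            (\<Sum>j\<in>{0..<m} \<rightarrow>\<^sub>E {0..<n}. (\<Prod>i<m. \<alpha> i (j i)) * ncKpi \<phi>t \<iota> m \<pi> (\<lambda>i. X (j i))))"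
proof (intro conjI impI ballI)
  assume "primitive_root m \<omega>"
  with assms show "ncK \<phi>t \<iota> m \<omega> Y =
      (\<Sum>j\<in>{0..<m} \<rightarrow>\<^sub>E {0..<n}. (\<Prod>i<m. \<alpha> i (j i)) * ncK \<phi>t \<iota> m \<omega> (\<lambda>i. X (j i)))"
    by (intro multilinear_affine_expansion multilinear_ncK ncK_eq_0_if_one)
next
  fix \<pi> assume "\<pi> \<in> Pi_set m" "\<forall>B\<in>\<pi>. \<not> (\<exists>x. B = {x})"
  with assms show "ncKpi \<phi>t \<iota> m \<pi> Y =
      (\<Sum>j\<in>{0..<m} \<rightarrow>\<^sub>E {0..<n}. (\<Prod>i<m. \<alpha> i (j i)) * ncKpi \<phi>t \<iota> m \<pi> (\<lambda>i. X (j i)))"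
    by (intro multilinear_affine_expansion multilinear_ncKpi ncKpi_eq_0_if_one) auto
qed

end
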